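(* Let $X$ be a random variable geometrically distributed with parameter $f \in (0,1]$, i.e. $\Pr[X = k] = (1-f)^{k-1} f$ for $k \in \{1,2,\dots\}$. Then with $d_2 = e^{\gamma}$, where $\gamma$ is the Euler–Mascheroni constant, $$\log(\mathbb{E}[X]) \le \mathbb{E}[\log(d_2 X)]$$ for all $f \in (0,1]$. *)

theory Defs
  imports "HOL-Probability.Probability"
begin

end

theory Submission
  imports Defs
begin

(* With q = 1 - f we have E[X] = 1/f, so ln E[X] = -ln(1 - q) = \<Sum>n. q^(n+1)/(n+1).
   Summation by parts turns E[ln X] = (1 - q) \<Sum>n. q^n ln(n+1) into
   \<Sum>n. q^(n+1) (ln(n+2) - ln(n+1)). The difference of the two series is
   \<Sum>n. q^(n+1) e_n with e_n = 1/(n+1) - ln(n+2) + ln(n+1) \<ge> 0, which is at most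
   \<Sum>n. e_n = \<gamma>. *)

lemma expectation_pmf_nat:
  fixes p :: "nat pmf" and g :: "nat \<Rightarrow> real"
  assumes "integrable p g"
  shows "measure_pmf.expectation p g = (\<Sum>n. pmf p n * g n)"
proof -
  have "integrable (count_space UNIV) (\<lambda>n. pmf p n * g n)"
    using assms unfolding measure_pmf_eq_density by (subst (asm) integrable_density) auto
  then show ?thesis
    unfolding measure_pmf_eq_density
    by (simp add: integral_density integral_count_space_nat)
qed

lemma summable_power_mult_ln_Suc:
  fixes q :: real
  assumes "\<bar>q\<bar> < 1"
  shows "summable (\<lambda>n. q ^ n * ln (real (Suc n)))"
proof (rule summable_comparison_test)
  show "\<exists>N. \<forall>n\<ge>N. norm (q ^ n * ln (real (Suc n))) \<le> \<bar>q\<bar> ^ n * real n"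
    using ln_add_one_self_le_self[of "real _"]
    by (auto simp: abs_mult power_abs intro!: mult_left_mono)
  show "summable (\<lambda>n. \<bar>q\<bar> ^ n * real n)"
    using geometric_sums_times_n[of "\<bar>q\<bar>"] assms by (auto simp: sums_iff)
qed

lemma sums_power_mult_diff:
  fixes a :: "nat \<Rightarrow> 'a::real_normed_field"
  assumes "summable (\<lambda>n. q ^ n * a n)"
  shows "(\<lambda>n. q ^ Suc n * (a (Suc n) - a n)) sums ((1 - q) * (\<Sum>n. q ^ n * a n) - a 0)"
proof -
  define S where "S = (\<Sum>n. q ^ n * a n)"
  have "(\<lambda>n. q ^ n * a n) sums S"
    using assms unfolding S_def by (rule summable_sums)
  then have shifted: "(\<lambda>n. q ^ Suc n * a (Suc n)) sums (S - a 0)"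
    and scaled: "(\<lambda>n. q ^ Suc n * a n) sums (q * S)"
    using sums_Suc_iff[of "\<lambda>n. q ^ n * a n"] sums_mult[of _ S q]
    by (simp_all add: mult.assoc)
  show ?thesis
    using sums_diff[OF shifted scaled] unfolding S_def[symmetric]
    by (simp add: algebra_simps)
qed

lemma sums_power_Suc_div_Suc:
  fixes q :: real
  assumes "\<bar>q\<bar> < 1"
  shows "(\<lambda>n. q ^ Suc n / real (Suc n)) sums (- ln (1 - q))"
proof -
  have "(\<lambda>n. q ^ n / real n) sums (- ln (1 - q))"
    using sums_minus[OF ln_series'[of "-q"]] assms by simp
  then show ?thesis
    by (subst sums_Suc_iff) simp
qed

lemma euler_mascheroni_summand_nonneg:
  "0 \<le> inverse (real (n + 1)) + ln (real (n + 1)) - ln (real (n + 2))"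
proof -
  have "ln (real (n + 2)) - ln (real (n + 1)) = ln (real (n + 2) / real (n + 1))"
    by (simp add: ln_div)
  also have "\<dots> \<le> real (n + 2) / real (n + 1) - 1"
    by (rule ln_le_minus_one) simp
  also have "\<dots> = inverse (real (n + 1))"
    by (simp add: field_simps)
  finally show ?thesis by simp
qed

lemma minus_ln_one_minus_le_euler_mascheroni:
  fixes q :: real
  assumes "0 \<le> q" "q < 1"
  shows "- ln (1 - q) \<le> euler_mascheroni + (1 - q) * (\<Sum>n. q ^ n * ln (real (Suc n)))"
proof -
  define S where "S = (\<Sum>n. q ^ n * ln (real (Suc n)))"
  define e where "e n = inverse (real (n + 1)) + ln (real (n + 1)) - ln (real (n + 2))" for n
  have "(\<lambda>n. q ^ Suc n * (ln (real (n + 2)) - ln (real (n + 1)))) sums ((1 - q) * S)"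
    using sums_power_mult_diff[where q = q and a = "\<lambda>n. ln (real (Suc n))"]
      summable_power_mult_ln_Suc[of q] assms
    unfolding S_def by (simp add: numeral_2_eq_2)
  from sums_diff[OF sums_power_Suc_div_Suc this]
  have weighted: "(\<lambda>n. q ^ Suc n * e n) sums (- ln (1 - q) - (1 - q) * S)"
    using assms by (simp add: e_def field_simps)
  have "q ^ Suc n * e n \<le> e n" for n
    using euler_mascheroni_summand_nonneg[of n] assms
    by (intro mult_left_le_one_le power_le_one) (simp_all add: e_def)
  from sums_le[OF this weighted] have "- ln (1 - q) - (1 - q) * S \<le> euler_mascheroni"
    unfolding e_def using euler_mascheroni_sum_real by blast
  then show ?thesis
    unfolding S_def by simp
qed

lemma expectation_geometric_pmf_Suc:
  assumes "p \<in> {0<..1}"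
  shows "measure_pmf.expectation (geometric_pmf p) (\<lambda>n. real (Suc n)) = 1 / p"
proof -
  have "measure_pmf.expectation (geometric_pmf p) (\<lambda>n. real n + 1)
          = measure_pmf.expectation (geometric_pmf p) real + 1"
    using integrable_real_geometric_pmf[OF assms] by (subst Bochner_Integration.integral_add) auto
  then show ?thesis
    using expectation_geometric_pmf[OF assms] assms by (simp add: field_simps)
qed

lemma integrable_geometric_pmf_ln_Suc:
  assumes "p \<in> {0<..1}"
  shows "integrable (geometric_pmf p) (\<lambda>n. ln (real (Suc n)))"
  using integrable_real_geometric_pmf[OF assms]
  by (rule Bochner_Integration.integrable_bound) (auto intro!: AE_I2 ln_add_one_self_le_self)

lemma expectation_geometric_pmf_ln_Suc:
  assumes "p \<in> {0<..1}"
  shows "measure_pmf.expectation (geometric_pmf p) (\<lambda>n. ln (real (Suc n)))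
           = p * (\<Sum>n. (1 - p) ^ n * ln (real (Suc n)))"
proof -
  have "summable (\<lambda>n. (1 - p) ^ n * ln (real (Suc n)))"
    using assms by (intro summable_power_mult_ln_Suc) auto
  then show ?thesis
    using assms
    by (subst expectation_pmf_nat[OF integrable_geometric_pmf_ln_Suc[OF assms]])
       (simp add: suminf_mult[symmetric] mult_ac)
qed

theorem lemma8:
  fixes f :: real
  assumes "f \<in> {0<..1}"
  shows "ln (measure_pmf.expectation (geometric_pmf f) (\<lambda>n. real (Suc n)))
         \<le> measure_pmf.expectation (geometric_pmf f)
              (\<lambda>n. ln (exp euler_mascheroni * real (Suc n)))"
proof -
  have "ln (measure_pmf.expectation (geometric_pmf f) (\<lambda>n. real (Suc n))) = - ln (1 - (1 - f))"
    using expectation_geometric_pmf_Suc[OF assms] assms by (simp add: ln_div)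
  also have "\<dots> \<le> euler_mascheroni + f * (\<Sum>n. (1 - f) ^ n * ln (real (Suc n)))"
    using minus_ln_one_minus_le_euler_mascheroni[of "1 - f"] assms by simp
  also have "\<dots> = euler_mascheroni
                    + measure_pmf.expectation (geometric_pmf f) (\<lambda>n. ln (real (Suc n)))"
    by (simp only: expectation_geometric_pmf_ln_Suc[OF assms])
  also have "\<dots> = measure_pmf.expectation (geometric_pmf f)
                    (\<lambda>n. euler_mascheroni + ln (real (Suc n)))"
    using integrable_geometric_pmf_ln_Suc[OF assms] by (simp add: Bochner_Integration.integral_add)
  also have "\<dots> = measure_pmf.expectation (geometric_pmf f)
                    (\<lambda>n. ln (exp euler_mascheroni * real (Suc n)))"
    by (simp add: ln_mult)
  finally show ?thesis .
qed

end
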